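(* Let $w\in\Sigma^*$ with $\iota(w)\ge 2$ and let $u$ be a nonempty scattered factor of $w$ with $|u|<\iota(w)$. If $u[1]\neq\operatorname{m}(w)[1]$, then $|C(w,u)|>1$.
   Context: The alphabet $\Sigma$ is exactly the set of letters occurring in $w$, with $|\Sigma|\ge2$. The universality index $\iota(w)$ is the largest $k$ such that every word in $\Sigma^k$ is a scattered factor (subsequence) of $w$. The arch factorisation of $w$ is $w=\operatorname{ar}_1(w)\cdots\operatorname{ar}_k(w)\operatorname{r}(w)$ where each arch contains every letter of $\Sigma$ and its last letter does not occur elsewhere in it, and $\operatorname{r}(w)$ does not contain all letters of $\Sigma$; then $k=\iota(w)$. The modus $\operatorname{m}(w)$ is the word of last letters of the arches in order. An embedding of $u$ in $w$ is a map $e:\{1,\dots,|u|\}\to\{1,\dots,|w|\}$ with $e(1)<\dots<e(|u|)$ and $u[i]=w[e(i)]$. The shuffle $\mathrm{Sh}(u,v)$ is the set of words of length $|u|+|v|$ admitting an embedding of $u$ and one of $v$ with disjoint images covering all positions, and $C(w,u)=\{v\in\Sigma^{|w|-|u|}: w\in\mathrm{Sh}(u,v)\}$. *)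

theory Defs
  imports Main "HOL-Library.Sublist"
begin

text \<open>Alphabet of w is set w. Scattered factor = subseq (library).\<close>

definition iota :: "'a list \<Rightarrow> nat" where
  "iota w = (GREATEST k. \<forall>v. length v = k \<and> set v \<subseteq> set w \<longrightarrow> subseq v w)"

definition arch_len :: "'a set \<Rightarrow> 'a list \<Rightarrow> nat" where
  "arch_len S x = (LEAST n. S \<subseteq> set (take n x))"

definition arch_rest :: "'a set \<Rightarrow> 'a list \<Rightarrow> 'a list" where
  "arch_rest S x = drop (arch_len S x) x"

text \<open>The i-th arch (0-based) of w, w.r.t. the alphabet set w.\<close>
definition arch :: "'a list \<Rightarrow> nat \<Rightarrow> 'a list" where
  "arch w i = (let x = (arch_rest (set w) ^^ i) w in take (arch_len (set w) x) x)"

definition modus :: "'a list \<Rightarrow> 'a list" where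
  "modus w = map (\<lambda>i. last (arch w i)) [0..<iota w]"

definition Cset :: "'a list \<Rightarrow> 'a list \<Rightarrow> 'a list set" where
  "Cset w u = {v. length v = length w - length u \<and> set v \<subseteq> set w \<and> w \<in> shuffles u v}"

end

theory Submission
  imports Defs
begin

text \<open>Let the first arch of \<open>w\<close> be \<open>x b\<close>, so \<open>b = m(w)[1]\<close> does not occur in \<open>x\<close> and every
  other letter does. Since \<open>|b u| \<le> \<iota>(w)\<close>, the word \<open>b u\<close> is a scattered factor of \<open>w\<close>, and its
  \<open>b\<close> can only be matched after \<open>x\<close>; hence \<open>u\<close> embeds into the rest \<open>y\<close> of \<open>w = x b y\<close>.
  Embedding all of \<open>u\<close> into \<open>y\<close> leaves a complement beginning with \<open>x b\<close>, whereas matching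
  \<open>u[1] \<noteq> b\<close> inside \<open>x\<close> and the rest of \<open>u\<close> inside \<open>y\<close> leaves a complement whose longest
  \<open>b\<close>-free prefix is shorter than \<open>x\<close>.\<close>

lemma append_in_shuffles_rightI: "zs \<in> shuffles xs ys \<Longrightarrow> ws @ zs \<in> shuffles xs (ws @ ys)"
  by (induction ws) (auto intro: Cons_in_shuffles_rightI)

lemma subseq_imp_in_shuffles: "subseq xs zs \<Longrightarrow> \<exists>ys. zs \<in> shuffles xs ys"
proof (induction rule: list_emb.induct)
  case (list_emb_Nil zs)
  then show ?case by auto
next
  case (list_emb_Cons xs zs z)
  then show ?case by (blast intro: Cons_in_shuffles_rightI)
next
  case (list_emb_Cons2 x z xs zs)
  then show ?case by (blast intro: Cons_in_shuffles_leftI)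
qed

lemma subseq_Cons_append_notin:
  "subseq (b # xs) (ys @ b # zs) \<Longrightarrow> b \<notin> set ys \<Longrightarrow> subseq xs zs"
  by (induction ys) (auto split: if_splits)

lemma in_Cset_if_in_shuffles: "w \<in> shuffles u v \<Longrightarrow> v \<in> Cset w u"
  unfolding Cset_def by (auto dest: length_shuffles set_shuffles)

lemma finite_Cset: "finite (Cset w u)"
  by (rule finite_subset[OF _ finite_lists_length_eq[of "set w" "length w - length u"]])
     (auto simp: Cset_def)

lemma subseq_of_length_iota:
  assumes "length v = iota w" "set v \<subseteq> set w"
  shows "subseq v w"
proof (cases "w = []")
  case True
  with assms show ?thesis by simp
next
  case False
  then obtain s where s: "s \<in> set w" by (meson ex_in_conv set_empty)
  let ?P = "\<lambda>k. \<forall>v. length v = k \<and> set v \<subseteq> set w \<longrightarrow> subseq v w"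
  have "?P (Greatest ?P)"
  proof (rule GreatestI_nat[where k = 0 and b = "length w"])
    show "?P 0" by simp
    show "k \<le> length w" if "?P k" for k
    proof -
      have "subseq (replicate k s) w" using that s by (simp add: set_replicate_conv_if)
      then show ?thesis by (metis length_replicate list_emb_length)
    qed
  qed
  with assms show ?thesis unfolding iota_def by blast
qed

lemma subseq_of_length_le_iota:
  assumes "length v \<le> iota w" "set v \<subseteq> set w"
  shows "subseq v w"
proof (cases "w = []")
  case True
  with assms show ?thesis by simp
next
  case False
  then obtain s where "s \<in> set w" by (meson ex_in_conv set_empty)
  with assms have "subseq (v @ replicate (iota w - length v) s) w"
    by (intro subseq_of_length_iota) (auto simp: set_replicate_conv_if)
  then show ?thesis by (meson subseq_order.order_trans subseq_rev_drop_many subseq_order.order_refl)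
qed

lemma first_arch_split:
  assumes "w \<noteq> []"
  obtains x b y where "w = x @ b # y" "arch w 0 = x @ [b]" "b \<notin> set x"
    "set w = insert b (set x)"
proof -
  define n where "n = arch_len (set w) w"
  have covers: "set w \<subseteq> set (take n w)"
    unfolding n_def arch_len_def by (rule LeastI[of _ "length w"]) simp
  have n_le: "n \<le> length w"
    unfolding n_def arch_len_def by (rule Least_le) simp
  have "n > 0" using covers assms by (cases n) auto
  then have not_covers: "\<not> set w \<subseteq> set (take (n - 1) w)"
    unfolding n_def arch_len_def by (intro not_less_Least) auto
  define x b y where "x = take (n - 1) w" and "b = w ! (n - 1)" and "y = drop n w"
  have n: "n = Suc (n - 1)" "n - 1 < length w" using \<open>n > 0\<close> n_le by auto
  have take_n: "take n w = x @ [b]"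
    unfolding x_def b_def by (subst n(1)) (rule take_Suc_conv_app_nth[OF n(2)])
  show thesis
  proof
    show "w = x @ b # y"
      unfolding x_def b_def y_def using id_take_nth_drop[OF n(2)] n(1) by simp
    show "arch w 0 = x @ [b]"
      unfolding arch_def using take_n n_def by simp
    show "b \<notin> set x"
      using covers not_covers take_n x_def by auto
    show "set w = insert b (set x)"
      using covers take_n set_take_subset[of n w] by auto
  qed
qed

lemma hd_modus: "iota w > 0 \<Longrightarrow> hd (modus w) = last (arch w 0)"
  by (simp add: modus_def upt_conv_Cons)

lemma one_lt_card_Cset_if_hd_in_prefix:
  assumes w: "w = x @ b # y" and "b \<notin> set x" "hd u \<in> set x" "u \<noteq> []" "subseq u y"
  shows "card (Cset w u) > 1"
proof -
  obtain z where z: "y \<in> shuffles u z"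
    using subseq_imp_in_shuffles \<open>subseq u y\<close> by blast
  obtain z' where z': "y \<in> shuffles (tl u) z'"
    using subseq_imp_in_shuffles \<open>subseq u y\<close> \<open>u \<noteq> []\<close> by (metis list.collapse subseq_Cons')
  obtain x1 x2 where x: "x = x1 @ hd u # x2"
    using \<open>hd u \<in> set x\<close> by (meson split_list)
  have "w \<in> shuffles u (x @ b # z)"
    using append_in_shuffles_rightI[OF z, of "x @ [b]"] w by simp
  then have in_Cset1: "x @ b # z \<in> Cset w u"
    by (rule in_Cset_if_in_shuffles)
  have "hd u # x2 @ b # y \<in> shuffles u (x2 @ b # z')"
    using append_in_shuffles_rightI[OF z', of "x2 @ [b]"] \<open>u \<noteq> []\<close>
    by (metis Cons_in_shuffles_leftI append.assoc append_Cons append_Nil list.collapse)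
  then have "w \<in> shuffles u (x1 @ x2 @ b # z')"
    using append_in_shuffles_rightI w x by fastforce
  then have in_Cset2: "x1 @ x2 @ b # z' \<in> Cset w u"
    by (rule in_Cset_if_in_shuffles)
  have "takeWhile (\<lambda>c. c \<noteq> b) (x @ b # z) = x"
    using \<open>b \<notin> set x\<close> by (subst takeWhile_append2) auto
  moreover have "takeWhile (\<lambda>c. c \<noteq> b) (x1 @ x2 @ b # z') = x1 @ x2"
    using \<open>b \<notin> set x\<close> x by (subst append_assoc[symmetric], subst takeWhile_append2) auto
  ultimately have "x @ b # z \<noteq> x1 @ x2 @ b # z'"
    using x by auto
  moreover have "card {x @ b # z, x1 @ x2 @ b # z'} \<le> card (Cset w u)"
    using in_Cset1 in_Cset2 by (intro card_mono finite_Cset) auto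
  ultimately show ?thesis by simp
qed

theorem lemma24:
  fixes w u :: "'a list"
  assumes "card (set w) \<ge> 2"
    and "iota w \<ge> 2"
    and "u \<noteq> []"
    and "subseq u w"
    and "length u < iota w"
    and "hd u \<noteq> hd (modus w)"
  shows "card (Cset w u) > 1"
proof -
  have "w \<noteq> []" using assms(1) by auto
  then obtain x b y where w: "w = x @ b # y" and arch0: "arch w 0 = x @ [b]"
    and "b \<notin> set x" and set_w: "set w = insert b (set x)"
    by (rule first_arch_split)
  have "hd (modus w) = b" using hd_modus[of w] assms(2) arch0 by simp
  have set_u: "set u \<subseteq> set w" using assms(4) by (auto dest: list_emb_set)
  have "subseq (b # u) (x @ b # y)"
    using subseq_of_length_le_iota[of "b # u" w] assms(5) set_u set_w w by simp
  then have "subseq u y" using \<open>b \<notin> set x\<close> by (rule subseq_Cons_append_notin)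
  moreover have "hd u \<in> set x"
    using set_u set_w assms(3,6) \<open>hd (modus w) = b\<close> by (auto dest: hd_in_set)
  ultimately show ?thesis
    using one_lt_card_Cset_if_hd_in_prefix[OF w \<open>b \<notin> set x\<close>] assms(3) by blast
qed

end
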